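(* Let $G$ be a graph and $v$ a vertex of $G$ of degree $1$. Then $G-v$ (delete $v$ and its incident edge) is strongly EFX-orientable if and only if $G$ is strongly EFX-orientable.
   Context: All graphs are finite and simple. For a graph $G=(V,E)$ and $v\in V$, $E(v)$ is the set of edges incident to $v$. A graphical instance on $G$ assigns to each vertex $v$ a valuation $f_v:2^E\to\mathbb{R}_{\ge 0}$ that is monotone ($A\subseteq B\Rightarrow f_v(A)\le f_v(B)$) and satisfies $f_v(X)=f_v(X\cap E(v))$ for all $X\subseteq E$. An orientation of $G$ chooses for each edge one of its endpoints as its head; vertex $v$ receives the bundle $X_v$ of edges whose head is $v$. The orientation is EFX if for all $u,v\in V$ and every $g\in X_v$, $f_u(X_u)\ge f_u(X_v\setminus\{g\})$. A graph $G$ is strongly EFX-orientable if for every graphical instance on $G$ there exists an EFX orientation. *)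

theory Defs
  imports Complex_Main
begin

definition simple_graph :: "'a set \<Rightarrow> 'a set set \<Rightarrow> bool" where
  "simple_graph V E \<longleftrightarrow> finite V \<and>
     (\<forall>e\<in>E. \<exists>x y. x \<noteq> y \<and> x \<in> V \<and> y \<in> V \<and> e = {x, y})"

definition inc_edges :: "'a set set \<Rightarrow> 'a \<Rightarrow> 'a set set" where
  "inc_edges E v = {e \<in> E. v \<in> e}"

definition degree :: "'a set set \<Rightarrow> 'a \<Rightarrow> nat" where
  "degree E v = card (inc_edges E v)"

definition del_vertex_V :: "'a set \<Rightarrow> 'a \<Rightarrow> 'a set" where
  "del_vertex_V V v = V - {v}"

definition del_vertex_E :: "'a set set \<Rightarrow> 'a \<Rightarrow> 'a set set" where
  "del_vertex_E E v = {e \<in> E. v \<notin> e}"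

definition graphical_instance ::
  "'a set \<Rightarrow> 'a set set \<Rightarrow> ('a \<Rightarrow> 'a set set \<Rightarrow> real) \<Rightarrow> bool" where
  "graphical_instance V E f \<longleftrightarrow>
     (\<forall>v\<in>V. \<forall>X. X \<subseteq> E \<longrightarrow> f v X \<ge> 0) \<and>
     (\<forall>v\<in>V. \<forall>A B. A \<subseteq> B \<and> B \<subseteq> E \<longrightarrow> f v A \<le> f v B) \<and>
     (\<forall>v\<in>V. \<forall>X. X \<subseteq> E \<longrightarrow> f v X = f v (X \<inter> inc_edges E v))"

definition orientation :: "'a set set \<Rightarrow> ('a set \<Rightarrow> 'a) \<Rightarrow> bool" where
  "orientation E h \<longleftrightarrow> (\<forall>e\<in>E. h e \<in> e)"

definition bundle_of :: "'a set set \<Rightarrow> ('a set \<Rightarrow> 'a) \<Rightarrow> 'a \<Rightarrow> 'a set set" where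
  "bundle_of E h v = {e \<in> E. h e = v}"

definition EFX_orientation ::
  "'a set \<Rightarrow> 'a set set \<Rightarrow> ('a \<Rightarrow> 'a set set \<Rightarrow> real) \<Rightarrow> ('a set \<Rightarrow> 'a) \<Rightarrow> bool" where
  "EFX_orientation V E f h \<longleftrightarrow> orientation E h \<and>
     (\<forall>u\<in>V. \<forall>v\<in>V. \<forall>g\<in>bundle_of E h v.
        f u (bundle_of E h u) \<ge> f u (bundle_of E h v - {g}))"

definition strongly_EFX_orientable :: "'a set \<Rightarrow> 'a set set \<Rightarrow> bool" where
  "strongly_EFX_orientable V E \<longleftrightarrow>
     (\<forall>f. graphical_instance V E f \<longrightarrow> (\<exists>h. EFX_orientation V E f h))"

end

theory Submission
  imports Defs
begin

text \<open>Deleting a vertex cannot hurt: an instance on a subgraph extends to the whole graph by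
  ignoring the new edges and giving the new vertices the zero valuation, and an EFX orientation
  of the extension restricts to one of the subgraph. Conversely, if v has a single edge e, orient
  e towards v and everything else as in an EFX orientation of G - v: nobody envies v up to one
  good, since v holds only e, and v values every other bundle like the empty set.\<close>

lemma graphical_instance_nonneg:
  "graphical_instance V E f \<Longrightarrow> u \<in> V \<Longrightarrow> X \<subseteq> E \<Longrightarrow> 0 \<le> f u X"
  unfolding graphical_instance_def by (elim conjE) (drule bspec, assumption, drule spec, erule mp)

lemma graphical_instance_mono:
  "graphical_instance V E f \<Longrightarrow> u \<in> V \<Longrightarrow> A \<subseteq> B \<Longrightarrow> B \<subseteq> E \<Longrightarrow> f u A \<le> f u B"
  unfolding graphical_instance_def by (elim conjE)
    (drule bspec, assumption, drule spec, drule spec, erule mp, blast)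

lemma graphical_instance_local:
  "graphical_instance V E f \<Longrightarrow> u \<in> V \<Longrightarrow> X \<subseteq> E \<Longrightarrow> f u X = f u (X \<inter> inc_edges E u)"
  unfolding graphical_instance_def by (elim conjE) (drule bspec, assumption, drule spec, erule mp)

lemma graphical_instance_le_if_disjoint_inc_edges:
  assumes "graphical_instance V E f" "u \<in> V" "X \<subseteq> E" "X \<inter> inc_edges E u = {}" "Y \<subseteq> E"
  shows "f u X \<le> f u Y"
proof -
  have "f u X = f u (X \<inter> inc_edges E u)"
    by (rule graphical_instance_local[OF assms(1-3)])
  also have "\<dots> = f u {}"
    using assms(4) by simp
  also have "\<dots> \<le> f u Y"
    using graphical_instance_mono[OF assms(1,2) _ assms(5)] by simp
  finally show ?thesis .
qed

lemma inc_edges_subset: "E' \<subseteq> E \<Longrightarrow> inc_edges E' u = inc_edges E u \<inter> E'"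
  unfolding inc_edges_def by blast

lemma bundle_of_subset: "E' \<subseteq> E \<Longrightarrow> bundle_of E' h u = bundle_of E h u \<inter> E'"
  unfolding bundle_of_def by blast

lemma graphical_instance_subgraph:
  assumes "graphical_instance V E f" "V' \<subseteq> V" "E' \<subseteq> E"
  shows "graphical_instance V' E' f"
  unfolding graphical_instance_def
proof (intro conjI ballI allI impI)
  fix u X assume "u \<in> V'" "X \<subseteq> E'"
  then have u: "u \<in> V" and X: "X \<subseteq> E" using assms(2,3) by auto
  show "0 \<le> f u X" using graphical_instance_nonneg[OF assms(1) u X] .
  have "f u X = f u (X \<inter> inc_edges E u)"
    by (rule graphical_instance_local[OF assms(1) u X])
  also have "X \<inter> inc_edges E u = X \<inter> inc_edges E' u"
    using \<open>X \<subseteq> E'\<close> inc_edges_subset[OF assms(3)] by blast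
  finally show "f u X = f u (X \<inter> inc_edges E' u)" .
next
  fix u A B assume "u \<in> V'" "A \<subseteq> B \<and> B \<subseteq> E'"
  then show "f u A \<le> f u B"
    using graphical_instance_mono[OF assms(1), of u A B] assms(2,3) by blast
qed

lemma graphical_instance_extend_by_zero:
  assumes "graphical_instance V' E' f'" "E' \<subseteq> E"
  shows "graphical_instance V E (\<lambda>u X. if u \<in> V' then f' u (X \<inter> E') else 0)"
  unfolding graphical_instance_def
proof (intro conjI ballI allI impI)
  fix u X assume "u \<in> V" "X \<subseteq> E"
  show "0 \<le> (if u \<in> V' then f' u (X \<inter> E') else 0)"
    using graphical_instance_nonneg[OF assms(1), of u "X \<inter> E'"] by simp
  show "(if u \<in> V' then f' u (X \<inter> E') else 0)
      = (if u \<in> V' then f' u (X \<inter> inc_edges E u \<inter> E') else 0)"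
  proof (cases "u \<in> V'")
    case True
    have "f' u (X \<inter> E') = f' u (X \<inter> E' \<inter> inc_edges E' u)"
      by (rule graphical_instance_local[OF assms(1) True]) blast
    also have "X \<inter> E' \<inter> inc_edges E' u = X \<inter> inc_edges E u \<inter> E'"
      using inc_edges_subset[OF assms(2)] by blast
    finally show ?thesis using True by simp
  qed simp
next
  fix u A B assume "u \<in> V" "A \<subseteq> B \<and> B \<subseteq> E"
  then show "(if u \<in> V' then f' u (A \<inter> E') else 0) \<le> (if u \<in> V' then f' u (B \<inter> E') else 0)"
    using graphical_instance_mono[OF assms(1), of u "A \<inter> E'" "B \<inter> E'"] by auto
qed

lemma EFX_orientationD:
  "EFX_orientation V E f h \<Longrightarrow> u \<in> V \<Longrightarrow> x \<in> V \<Longrightarrow> g \<in> bundle_of E h x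
   \<Longrightarrow> f u (bundle_of E h x - {g}) \<le> f u (bundle_of E h u)"
  unfolding EFX_orientation_def by blast

lemma strongly_EFX_orientable_subgraph:
  assumes "strongly_EFX_orientable V E" "V' \<subseteq> V" "E' \<subseteq> E"
  shows "strongly_EFX_orientable V' E'"
  unfolding strongly_EFX_orientable_def
proof (intro allI impI)
  fix f' assume gi': "graphical_instance V' E' f'"
  define f where "f u X = (if u \<in> V' then f' u (X \<inter> E') else 0)" for u X
  have "graphical_instance V E f"
    unfolding f_def by (rule graphical_instance_extend_by_zero[OF gi' assms(3)])
  then obtain h where h: "EFX_orientation V E f h"
    using assms(1) unfolding strongly_EFX_orientable_def by blast
  have "EFX_orientation V' E' f' h"
    unfolding EFX_orientation_def
  proof (intro conjI ballI)
    show "orientation E' h"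
      using h assms(3) unfolding EFX_orientation_def orientation_def by blast
  next
    fix u x g assume u: "u \<in> V'" and x: "x \<in> V'" and g: "g \<in> bundle_of E' h x"
    have restrict: "bundle_of E h y \<inter> E' = bundle_of E' h y" for y
      using bundle_of_subset[OF assms(3)] by blast
    have "g \<in> bundle_of E h x" using g restrict by blast
    then have "f u (bundle_of E h x - {g}) \<le> f u (bundle_of E h u)"
      using EFX_orientationD[OF h, of u x g] u x assms(2) by blast
    moreover have "(bundle_of E h x - {g}) \<inter> E' = bundle_of E' h x - {g}"
      using restrict by blast
    ultimately show "f' u (bundle_of E' h x - {g}) \<le> f' u (bundle_of E' h u)"
      using u restrict unfolding f_def by simp
  qed
  then show "\<exists>h. EFX_orientation V' E' f' h" by blast
qed

lemma strongly_EFX_orientable_add_pendant: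
  assumes leaf: "inc_edges E v \<subseteq> {e}"
    and S: "strongly_EFX_orientable (del_vertex_V V v) (del_vertex_E E v)"
  shows "strongly_EFX_orientable V E"
  unfolding strongly_EFX_orientable_def
proof (intro allI impI)
  fix f assume gi: "graphical_instance V E f"
  let ?V' = "del_vertex_V V v" and ?E' = "del_vertex_E E v"
  have E'_sub: "?E' \<subseteq> E" by (auto simp: del_vertex_E_def)
  have "graphical_instance ?V' ?E' f"
    by (rule graphical_instance_subgraph[OF gi _ E'_sub]) (auto simp: del_vertex_V_def)
  then obtain h' where h': "EFX_orientation ?V' ?E' f h'"
    using S unfolding strongly_EFX_orientable_def by blast
  define h where "h d = (if v \<in> d then v else h' d)" for d
  have "orientation ?E' h'" using h' unfolding EFX_orientation_def by blast
  then have orientation: "orientation E h"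
    unfolding orientation_def h_def del_vertex_E_def by auto
  have bundle_v: "bundle_of E h v \<subseteq> {e}"
    using leaf \<open>orientation ?E' h'\<close>
    unfolding orientation_def bundle_of_def inc_edges_def h_def del_vertex_E_def by auto
  have bundle_other: "bundle_of E h u = bundle_of ?E' h' u" if "u \<noteq> v" for u
    using that unfolding bundle_of_def h_def del_vertex_E_def by auto
  have "EFX_orientation V E f h"
    unfolding EFX_orientation_def
  proof (intro conjI orientation ballI)
    fix u x g assume u: "u \<in> V" and x: "x \<in> V" and g: "g \<in> bundle_of E h x"
    have B_sub: "bundle_of E h y \<subseteq> E" for y by (auto simp: bundle_of_def)
    show "f u (bundle_of E h x - {g}) \<le> f u (bundle_of E h u)"
    proof (cases "u = v \<or> x = v")
      case True
      have "(bundle_of E h x - {g}) \<inter> inc_edges E u = {}"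
      proof (cases "x = v")
        case True
        then show ?thesis using g bundle_v by auto
      next
        case False
        with \<open>u = v \<or> x = v\<close> show ?thesis
          unfolding bundle_of_def inc_edges_def h_def by auto
      qed
      moreover have "bundle_of E h x - {g} \<subseteq> E" using B_sub by blast
      ultimately show ?thesis
        using graphical_instance_le_if_disjoint_inc_edges[OF gi u _ _ B_sub] by blast
    next
      case False
      then have "u \<noteq> v" "x \<noteq> v" by auto
      then have "u \<in> ?V'" "x \<in> ?V'" using u x by (auto simp: del_vertex_V_def)
      moreover have "g \<in> bundle_of ?E' h' x" using g bundle_other[OF \<open>x \<noteq> v\<close>] by simp
      ultimately have "f u (bundle_of ?E' h' x - {g}) \<le> f u (bundle_of ?E' h' u)"
        by (rule EFX_orientationD[OF h'])
      then show ?thesis by (simp only: bundle_other[OF \<open>u \<noteq> v\<close>] bundle_other[OF \<open>x \<noteq> v\<close>])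
    qed
  qed
  then show "\<exists>h. EFX_orientation V E f h" by blast
qed

theorem mainTheorem9:
  fixes V :: "'a set" and E :: "'a set set" and v :: 'a
  assumes "simple_graph V E" and "v \<in> V" and "degree E v = 1"
  shows "strongly_EFX_orientable (del_vertex_V V v) (del_vertex_E E v)
           \<longleftrightarrow> strongly_EFX_orientable V E"
proof
  obtain e where "inc_edges E v = {e}"
    using \<open>degree E v = 1\<close> unfolding degree_def by (rule card_1_singletonE)
  then have "inc_edges E v \<subseteq> {e}" by simp
  then show "strongly_EFX_orientable V E"
    if "strongly_EFX_orientable (del_vertex_V V v) (del_vertex_E E v)"
    using that by (rule strongly_EFX_orientable_add_pendant)
next
  have "del_vertex_V V v \<subseteq> V" "del_vertex_E E v \<subseteq> E"
    by (auto simp: del_vertex_V_def del_vertex_E_def)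
  then show "strongly_EFX_orientable (del_vertex_V V v) (del_vertex_E E v)"
    if "strongly_EFX_orientable V E"
    using strongly_EFX_orientable_subgraph[OF that] by blast
qed

end
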